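(* Let $H$ be a CAT($-1$) space, $G<\operatorname{Isom}(H)$ acting cocompactly, and $\Phi\in\mathcal{H}$ a $G$-invariant function. Then $\lambda_\Phi=\lambda_{\hat\Phi}\geq\lambda_{\mathrm{Sym}(\Phi)}$.
   Context: $SH$ is the space of unit speed bi-infinite geodesics in $H$ with metric $\operatorname{dist}(\gamma_1,\gamma_2)=\frac12\int_{-\infty}^{\infty}d(\gamma_1(t),\gamma_2(t))e^{-|t|}dt$, geodesic flow $\mathsf g^t\gamma(s)=\gamma(s+t)$, $G$ acting by composition; every geodesic segment is assumed to extend to a bi-infinite geodesic. $\mathcal{H}$ is the set of bounded Hölder functions $\Phi$ on $SH$ with $\Phi(\gamma_1)=\Phi(\gamma_2)$ whenever $\gamma_1|_{[0,\epsilon]}=\gamma_2|_{[0,\epsilon]}$ for some $\epsilon>0$. $\hat\Phi(\gamma)=\Phi(-\gamma)$ with $-\gamma(t)=\gamma(-t)$, and $\mathrm{Sym}(\Phi)=\frac{\Phi+\hat\Phi}{2}$. For any function $\Psi$ on $SH$ and $p\neq q$, $d^\Psi(p,q)=\int_0^{d(p,q)}\Psi(\mathsf g^t\gamma_{p,q})dt$ with $\gamma_{p,q}\in SH$ a geodesic with $\gamma_{p,q}(0)=p$, $\gamma_{p,q}(d(p,q))=q$. The critical exponent is $\lambda_\Psi=\sup\{\lambda:\sum_{g\in G}e^{-d^\Psi(p,gp)-\lambda d(p,gp)}=\infty\}$ for a fixed $p\in H$ (independent of $p$). *)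

theory Defs
  imports "HOL-Analysis.Analysis"
begin

definition hplane :: "complex set" where
  "hplane = {z. Im z > 0}"

definition hdist :: "complex \<Rightarrow> complex \<Rightarrow> real" where
  "hdist z w = arcosh (1 + (cmod (z - w))\<^sup>2 / (2 * Im z * Im w))"

definition geod_seg :: "(real \<Rightarrow> 'a::metric_space) \<Rightarrow> real \<Rightarrow> 'a \<Rightarrow> 'a \<Rightarrow> bool" where
  "geod_seg c L x y \<longleftrightarrow> 0 \<le> L \<and> c 0 = x \<and> c L = y \<and>
     (\<forall>s\<in>{0..L}. \<forall>t\<in>{0..L}. dist (c s) (c t) = \<bar>s - t\<bar>)"

definition geodesic_space :: "'a::metric_space itself \<Rightarrow> bool" where
  "geodesic_space TYPE('a) \<longleftrightarrow> (\<forall>x y::'a. \<exists>c. geod_seg c (dist x y) x y)"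

text \<open>Comparison points: pbar is a comparison point, on the comparison side [ubar,vbar]
  (of hyperbolic length L), of the point at parameter s of a side of length L.\<close>
definition hcomp_pt :: "complex \<Rightarrow> complex \<Rightarrow> real \<Rightarrow> real \<Rightarrow> complex \<Rightarrow> bool" where
  "hcomp_pt ubar vbar L s pbar \<longleftrightarrow> pbar \<in> hplane \<and> hdist ubar pbar = s \<and> hdist pbar vbar = L - s"

definition tri_comp_pairs ::
  "(real \<Rightarrow> 'a::metric_space) \<Rightarrow> (real \<Rightarrow> 'a) \<Rightarrow> (real \<Rightarrow> 'a) \<Rightarrow> 'a \<Rightarrow> 'a \<Rightarrow> 'a
     \<Rightarrow> complex \<Rightarrow> complex \<Rightarrow> complex \<Rightarrow> ('a \<times> complex) set" where
  "tri_comp_pairs c1 c2 c3 x y z xb yb zb =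
     {(c1 s, pb) | s pb. s \<in> {0..dist x y} \<and> hcomp_pt xb yb (dist x y) s pb} \<union>
     {(c2 s, pb) | s pb. s \<in> {0..dist y z} \<and> hcomp_pt yb zb (dist y z) s pb} \<union>
     {(c3 s, pb) | s pb. s \<in> {0..dist z x} \<and> hcomp_pt zb xb (dist z x) s pb}"

definition CAT_minus1 :: "'a::metric_space itself \<Rightarrow> bool" where
  "CAT_minus1 TYPE('a) \<longleftrightarrow> geodesic_space TYPE('a) \<and>
     (\<forall>(x::'a) y z c1 c2 c3 xb yb zb.
        geod_seg c1 (dist x y) x y \<and> geod_seg c2 (dist y z) y z \<and> geod_seg c3 (dist z x) z x \<and>
        xb \<in> hplane \<and> yb \<in> hplane \<and> zb \<in> hplane \<and>
        hdist xb yb = dist x y \<and> hdist yb zb = dist y z \<and> hdist zb xb = dist z x \<longrightarrow>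
        (\<forall>(p, pb) \<in> tri_comp_pairs c1 c2 c3 x y z xb yb zb.
         \<forall>(q, qb) \<in> tri_comp_pairs c1 c2 c3 x y z xb yb zb. dist p q \<le> hdist pb qb))"

definition SH :: "(real \<Rightarrow> 'a::metric_space) set" where
  "SH = {\<gamma>. \<forall>s t. dist (\<gamma> s) (\<gamma> t) = \<bar>s - t\<bar>}"

definition dist_SH :: "(real \<Rightarrow> 'a::metric_space) \<Rightarrow> (real \<Rightarrow> 'a) \<Rightarrow> real" where
  "dist_SH \<gamma>1 \<gamma>2 = (1/2) * integral\<^sup>L lborel (\<lambda>t. dist (\<gamma>1 t) (\<gamma>2 t) * exp (- \<bar>t\<bar>))"

definition gflow :: "real \<Rightarrow> (real \<Rightarrow> 'a) \<Rightarrow> (real \<Rightarrow> 'a)" where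
  "gflow t \<gamma> = (\<lambda>s. \<gamma> (s + t))"

definition geod_extendable :: "'a::metric_space itself \<Rightarrow> bool" where
  "geod_extendable TYPE('a) \<longleftrightarrow>
     (\<forall>(c::real \<Rightarrow> 'a) L x y. geod_seg c L x y \<longrightarrow> (\<exists>\<gamma>\<in>SH. \<forall>t\<in>{0..L}. \<gamma> t = c t))"

definition Hclass :: "((real \<Rightarrow> 'a::metric_space) \<Rightarrow> real) set" where
  "Hclass = {\<Phi>. (\<exists>B. \<forall>\<gamma>\<in>SH. \<bar>\<Phi> \<gamma>\<bar> \<le> B) \<and>
      (\<exists>C \<alpha>. \<alpha> > 0 \<and> (\<forall>\<gamma>1\<in>SH. \<forall>\<gamma>2\<in>SH. \<bar>\<Phi> \<gamma>1 - \<Phi> \<gamma>2\<bar> \<le> C * dist_SH \<gamma>1 \<gamma>2 powr \<alpha>)) \<and>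
      (\<forall>\<gamma>1\<in>SH. \<forall>\<gamma>2\<in>SH. \<forall>\<epsilon>>0. (\<forall>t\<in>{0..\<epsilon>}. \<gamma>1 t = \<gamma>2 t) \<longrightarrow> \<Phi> \<gamma>1 = \<Phi> \<gamma>2)}"

definition flip :: "(real \<Rightarrow> 'a) \<Rightarrow> (real \<Rightarrow> 'a)" where
  "flip \<gamma> = (\<lambda>t. \<gamma> (- t))"

definition hat :: "((real \<Rightarrow> 'a) \<Rightarrow> real) \<Rightarrow> ((real \<Rightarrow> 'a) \<Rightarrow> real)" where
  "hat \<Phi> = (\<lambda>\<gamma>. \<Phi> (flip \<gamma>))"

definition Sym :: "((real \<Rightarrow> 'a) \<Rightarrow> real) \<Rightarrow> ((real \<Rightarrow> 'a) \<Rightarrow> real)" where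
  "Sym \<Phi> = (\<lambda>\<gamma>. (\<Phi> \<gamma> + hat \<Phi> \<gamma>) / 2)"

text \<open>d^Psi(p,q), with gamma_{p,q} some element of SH with gamma(0)=p, gamma(d(p,q))=q
  (exists by extendability; the choice does not matter for Psi in the relevant classes).
  For p = q the value is 0.\<close>
definition dPsi :: "((real \<Rightarrow> 'a::metric_space) \<Rightarrow> real) \<Rightarrow> 'a \<Rightarrow> 'a \<Rightarrow> real" where
  "dPsi \<Psi> p q = (let \<gamma> = (SOME \<gamma>. \<gamma> \<in> SH \<and> \<gamma> 0 = p \<and> \<gamma> (dist p q) = q)
                  in integral {0..dist p q} (\<lambda>t. \<Psi> (gflow t \<gamma>)))"

definition isometry :: "('a::metric_space \<Rightarrow> 'a) \<Rightarrow> bool" where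
  "isometry g \<longleftrightarrow> bij g \<and> (\<forall>x y. dist (g x) (g y) = dist x y)"

definition isom_subgroup :: "('a::metric_space \<Rightarrow> 'a) set \<Rightarrow> bool" where
  "isom_subgroup G \<longleftrightarrow> (\<forall>g\<in>G. isometry g) \<and> id \<in> G \<and>
     (\<forall>g\<in>G. \<forall>h\<in>G. g \<circ> h \<in> G) \<and> (\<forall>g\<in>G. inv g \<in> G)"

definition cocompact :: "('a::metric_space \<Rightarrow> 'a) set \<Rightarrow> bool" where
  "cocompact G \<longleftrightarrow> (\<exists>K. compact K \<and> (\<forall>x. \<exists>g\<in>G. x \<in> g ` K))"

definition G_invariant :: "('a::metric_space \<Rightarrow> 'a) set \<Rightarrow> ((real \<Rightarrow> 'a) \<Rightarrow> real) \<Rightarrow> bool" where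
  "G_invariant G \<Phi> \<longleftrightarrow> (\<forall>g\<in>G. \<forall>\<gamma>\<in>SH. \<Phi> (g \<circ> \<gamma>) = \<Phi> \<gamma>)"

definition crit_exp :: "('a::metric_space \<Rightarrow> 'a) set \<Rightarrow> ((real \<Rightarrow> 'a) \<Rightarrow> real) \<Rightarrow> 'a \<Rightarrow> ereal" where
  "crit_exp G \<Psi> p = Sup {ereal l | l.
      (\<Sum>\<^sub>\<infinity>g\<in>G. ennreal (exp (- dPsi \<Psi> p (g p) - l * dist p (g p)))) = \<infinity>}"

end

theory Submission
  imports Defs
begin

text \<open>CAT(-1) spaces are uniquely geodesic, so, up to the germ condition defining \<open>\<H>\<close>,
  \<open>d\<^sup>\<Phi>(p, q)\<close> is the integral of \<open>\<Phi>\<close> along the geodesic from \<open>p\<close> to \<open>q\<close>. Running that geodesic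
  backwards gives \<open>dPsi (hat \<Phi>) p q = dPsi \<Phi> q p\<close>, and \<open>G\<close>-invariance gives
  \<open>dPsi \<Phi> (g p) p = dPsi \<Phi> p (inv g p)\<close>; hence the Poincare series of \<open>\<Phi>\<close> and \<open>hat \<Phi>\<close> coincide after
  reindexing \<open>g \<mapsto> g\<^sup>-\<^sup>1\<close>. The exponent in each term of the series of \<open>Sym \<Phi>\<close> is the mean of the
  exponents for \<open>\<Phi>\<close> and \<open>hat \<Phi>\<close>, so the term is at most their sum, and divergence for \<open>Sym \<Phi>\<close>
  forces divergence for \<open>hat \<Phi>\<close>.\<close>

lemma hdist_exp_imag_axis: "hdist (Complex 0 (exp u)) (Complex 0 (exp v)) = \<bar>u - v\<bar>"
proof -
  have cmod_eq: "(cmod (Complex 0 (exp u) - Complex 0 (exp v)))\<^sup>2 = (exp u - exp v)\<^sup>2"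
    by (simp add: cmod_def)
  have cosh_eq: "1 + (exp u - exp v)\<^sup>2 / (2 * exp u * exp v) = cosh (u - v)"
    by (simp add: cosh_def exp_diff field_simps power2_eq_square)
  have "cosh (u - v) = cosh \<bar>u - v\<bar>"
    by (simp add: abs_if)
  then have "hdist (Complex 0 (exp u)) (Complex 0 (exp v)) = arcosh (cosh \<bar>u - v\<bar>)"
    unfolding hdist_def complex.sel cmod_eq cosh_eq by (rule arg_cong)
  also have "\<dots> = \<bar>u - v\<bar>"
    by (rule arcosh_cosh_real) simp
  finally show ?thesis .
qed

lemma CAT_minus1_comparison:
  fixes x y z :: "'a::metric_space"
  assumes "CAT_minus1 TYPE('a)"
    and "geod_seg c1 (dist x y) x y" "geod_seg c2 (dist y z) y z" "geod_seg c3 (dist z x) z x"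
    and "xb \<in> hplane" "yb \<in> hplane" "zb \<in> hplane"
    and "hdist xb yb = dist x y" "hdist yb zb = dist y z" "hdist zb xb = dist z x"
    and "(u, ub) \<in> tri_comp_pairs c1 c2 c3 x y z xb yb zb"
    and "(v, vb) \<in> tri_comp_pairs c1 c2 c3 x y z xb yb zb"
  shows "dist u v \<le> hdist ub vb"
  using assms unfolding CAT_minus1_def by fast

lemma geod_seg_reverse: "geod_seg c L x y \<Longrightarrow> geod_seg (\<lambda>s. c (L - s)) L y x"
  unfolding geod_seg_def by (auto simp: abs_minus_commute)

lemma CAT_minus1_geod_seg_unique:
  fixes x y :: "'a::metric_space"
  assumes cat: "CAT_minus1 TYPE('a)"
    and c1: "geod_seg c1 (dist x y) x y" and c2: "geod_seg c2 (dist x y) x y"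
    and s: "s \<in> {0..dist x y}"
  shows "c1 s = c2 s"
proof -
  txt \<open>Compare the degenerate triangle \<open>x, y, y\<close> with a triangle on the imaginary axis, along
    which \<open>t \<mapsto> i e\<^sup>t\<close> is a unit speed geodesic: \<open>c1 s\<close> and \<open>c2 s\<close> share the comparison
    point \<open>i e\<^sup>s\<close>.\<close>
  define d where "d = dist x y"
  define ib where "ib u = Complex 0 (exp u)" for u
  have hd: "hdist (ib u) (ib v) = \<bar>u - v\<bar>" for u v
    unfolding ib_def by (rule hdist_exp_imag_axis)
  have hp: "ib u \<in> hplane" for u
    unfolding ib_def hplane_def by simp
  let ?T = "tri_comp_pairs c1 (\<lambda>_. y) (\<lambda>r. c2 (d - r)) x y y (ib 0) (ib d) (ib d)"
  have rev: "geod_seg (\<lambda>r. c2 (d - r)) (dist y x) y x"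
    using geod_seg_reverse[OF c2] by (simp add: d_def dist_commute)
  have const: "geod_seg (\<lambda>_. y) (dist y y) y y"
    unfolding geod_seg_def by simp
  have "0 \<le> s" "s \<le> d"
    using s by (auto simp: d_def)
  then have "hcomp_pt (ib 0) (ib d) (dist x y) s (ib s)"
    "hcomp_pt (ib d) (ib 0) (dist y x) (d - s) (ib s)" "d - s \<in> {0..dist y x}"
    unfolding hcomp_pt_def by (simp_all add: hp hd d_def dist_commute)
  with s have mem: "(c1 s, ib s) \<in> ?T" "(c2 (d - (d - s)), ib s) \<in> ?T"
    unfolding tri_comp_pairs_def by blast+
  have sides: "hdist (ib 0) (ib d) = dist x y" "hdist (ib d) (ib d) = dist y y"
    "hdist (ib d) (ib 0) = dist y x"
    by (simp_all add: hd d_def dist_commute)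
  have "dist (c1 s) (c2 (d - (d - s))) \<le> hdist (ib s) (ib s)"
    by (rule CAT_minus1_comparison[OF cat c1 const rev hp hp hp sides mem])
  then show ?thesis
    by (simp add: hd)
qed

lemma SH_dist: "\<gamma> \<in> SH \<Longrightarrow> dist (\<gamma> s) (\<gamma> t) = \<bar>s - t\<bar>"
  by (simp add: SH_def)

lemma SH_geod_seg: "\<gamma> \<in> SH \<Longrightarrow> 0 \<le> L \<Longrightarrow> geod_seg \<gamma> L (\<gamma> 0) (\<gamma> L)"
  by (simp add: geod_seg_def SH_dist)

lemma gflow_in_SH: "\<gamma> \<in> SH \<Longrightarrow> gflow t \<gamma> \<in> SH"
  by (simp add: SH_def gflow_def)

lemma flip_in_SH: "\<gamma> \<in> SH \<Longrightarrow> flip \<gamma> \<in> SH"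
  by (simp add: SH_def flip_def abs_minus_commute)

lemma isometry_comp_in_SH: "isometry g \<Longrightarrow> \<gamma> \<in> SH \<Longrightarrow> g \<circ> \<gamma> \<in> SH"
  by (simp add: SH_def isometry_def)

lemma Hclass_germ:
  assumes "\<Phi> \<in> Hclass" "\<gamma>1 \<in> SH" "\<gamma>2 \<in> SH" "\<epsilon> > 0" "\<And>t. t \<in> {0..\<epsilon>} \<Longrightarrow> \<gamma>1 t = \<gamma>2 t"
  shows "\<Phi> \<gamma>1 = \<Phi> \<gamma>2"
  using assms unfolding Hclass_def by blast

lemma Hclass_continuous_on_unit_speed_family:
  fixes \<Phi> :: "(real \<Rightarrow> 'a::metric_space) \<Rightarrow> real" and A :: "real \<Rightarrow> real \<Rightarrow> 'a"
  assumes P: "\<Phi> \<in> Hclass" and AS: "\<And>t. A t \<in> SH"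
    and Ad: "\<And>t s u. dist (A t u) (A s u) = \<bar>t - s\<bar>"
  shows "continuous_on UNIV (\<lambda>t. \<Phi> (A t))"
proof -
  obtain C \<alpha> where \<alpha>: "\<alpha> > 0" and hoelder: "\<And>\<gamma>1 \<gamma>2. \<gamma>1 \<in> SH \<Longrightarrow> \<gamma>2 \<in> SH \<Longrightarrow>
      \<bar>\<Phi> \<gamma>1 - \<Phi> \<gamma>2\<bar> \<le> C * dist_SH \<gamma>1 \<gamma>2 powr \<alpha>"
    using P unfolding Hclass_def by blast
  define K where "K = (1/2) * integral\<^sup>L lborel (\<lambda>u::real. exp (- \<bar>u\<bar>))"
  have "K \<ge> 0"
    unfolding K_def by (simp add: integral_nonneg)
  have dist_SH_A: "dist_SH (A s) (A t) = \<bar>s - t\<bar> * K" for s t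
    unfolding dist_SH_def K_def by (simp add: Ad)
  have "isCont (\<lambda>t. \<Phi> (A t)) t" for t
  proof -
    have "((\<lambda>s. \<bar>s - t\<bar> * K) \<longlongrightarrow> \<bar>t - t\<bar> * K) (at t)"
      by (intro tendsto_intros)
    then have "((\<lambda>s. (\<bar>s - t\<bar> * K) powr \<alpha>) \<longlongrightarrow> 0) (at t)"
      by (intro tendsto_zero_powrI) (use \<open>K \<ge> 0\<close> \<alpha> in auto)
    then have "((\<lambda>s. C * (\<bar>s - t\<bar> * K) powr \<alpha>) \<longlongrightarrow> 0) (at t)"
      by (rule tendsto_mult_right_zero)
    then have "((\<lambda>s. \<Phi> (A s) - \<Phi> (A t)) \<longlongrightarrow> 0) (at t)"
      by (rule Lim_null_comparison[rotated])
         (use hoelder[OF AS AS] dist_SH_A in \<open>intro always_eventually allI, simp\<close>)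
    then show ?thesis
      unfolding isCont_def by (rule LIM_zero_cancel)
  qed
  then show ?thesis
    by (simp add: continuous_on_eq_continuous_at)
qed

lemma integrable_Hclass_along_flow:
  assumes P: "\<Phi> \<in> Hclass" and \<gamma>: "\<gamma> \<in> SH"
  shows "(\<lambda>t. \<Phi> (gflow t \<gamma>)) integrable_on {a..b}"
proof -
  have "continuous_on UNIV (\<lambda>t. \<Phi> (gflow t \<gamma>))"
    by (rule Hclass_continuous_on_unit_speed_family[OF P gflow_in_SH[OF \<gamma>]])
       (simp add: gflow_def SH_dist[OF \<gamma>])
  then have "continuous_on {a..b} (\<lambda>t. \<Phi> (gflow t \<gamma>))"
    by (rule continuous_on_subset) simp
  then show ?thesis
    by (rule integrable_continuous_interval)
qed

lemma integrable_hat_Hclass_along_flow: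
  assumes P: "\<Phi> \<in> Hclass" and \<gamma>: "\<gamma> \<in> SH"
  shows "(\<lambda>t. hat \<Phi> (gflow t \<gamma>)) integrable_on {a..b}"
proof -
  have "continuous_on UNIV (\<lambda>t. \<Phi> (flip (gflow t \<gamma>)))"
    by (rule Hclass_continuous_on_unit_speed_family[OF P flip_in_SH[OF gflow_in_SH[OF \<gamma>]]])
       (simp add: flip_def gflow_def SH_dist[OF \<gamma>])
  then have "continuous_on {a..b} (\<lambda>t. \<Phi> (flip (gflow t \<gamma>)))"
    by (rule continuous_on_subset) simp
  then show ?thesis
    unfolding hat_def by (rule integrable_continuous_interval)
qed

lemma integral_Icc_reflect:
  fixes f :: "real \<Rightarrow> real"
  shows "integral {0..d} (\<lambda>t. f (d - t)) = integral {0..d} f"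
proof -
  have "integral {0..d} (\<lambda>t. f (d - t)) = integral {-d..0} (\<lambda>t. f (d + t))"
    using Henstock_Kurzweil_Integration.integral_reflect_real[of 0 "- d" "\<lambda>t. f (d + t)"] by simp
  also have "\<dots> = integral {0..d} f"
    using integral_shift_Icc_real[of "-d" 0 "\<lambda>t. f t" d] by (simp add: o_def add.commute)
  finally show ?thesis .
qed

definition chosen_geod :: "'a::metric_space \<Rightarrow> 'a \<Rightarrow> real \<Rightarrow> 'a" where
  "chosen_geod p q = (SOME \<gamma>. \<gamma> \<in> SH \<and> \<gamma> 0 = p \<and> \<gamma> (dist p q) = q)"

lemma dPsi_chosen_geod: "dPsi \<Psi> p q = integral {0..dist p q} (\<lambda>t. \<Psi> (gflow t (chosen_geod p q)))"
  by (simp add: dPsi_def chosen_geod_def Let_def)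

lemma chosen_geod:
  fixes p q :: "'a::metric_space"
  assumes "CAT_minus1 TYPE('a)" "geod_extendable TYPE('a)"
  shows "chosen_geod p q \<in> SH \<and> chosen_geod p q 0 = p \<and> chosen_geod p q (dist p q) = q"
proof -
  obtain c where c: "geod_seg c (dist p q) p q"
    using assms(1) unfolding CAT_minus1_def geodesic_space_def by blast
  then obtain \<gamma> where "\<gamma> \<in> SH" "\<forall>t\<in>{0..dist p q}. \<gamma> t = c t"
    using assms(2) unfolding geod_extendable_def by blast
  with c have "\<exists>\<gamma>. \<gamma> \<in> SH \<and> \<gamma> 0 = p \<and> \<gamma> (dist p q) = q"
    unfolding geod_seg_def by auto
  then show ?thesis
    unfolding chosen_geod_def by (rule someI_ex)
qed

lemma dPsi_eq_integral_along:
  fixes p q :: "'a::metric_space"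
  assumes cat: "CAT_minus1 TYPE('a)" and ext: "geod_extendable TYPE('a)" and P: "\<Phi> \<in> Hclass"
    and \<gamma>: "\<gamma> \<in> SH" "\<gamma> 0 = p" "\<gamma> (dist p q) = q"
  shows "dPsi \<Phi> p q = integral {0..dist p q} (\<lambda>t. \<Phi> (gflow t \<gamma>))"
proof -
  define d where "d = dist p q"
  define \<gamma>0 where "\<gamma>0 = chosen_geod p q"
  have \<gamma>0: "\<gamma>0 \<in> SH" "\<gamma>0 0 = p" "\<gamma>0 d = q"
    using chosen_geod[OF cat ext] unfolding \<gamma>0_def d_def by auto
  have "geod_seg \<gamma>0 (dist p q) p q" "geod_seg \<gamma> (dist p q) p q"
    using SH_geod_seg[OF \<gamma>0(1), of "dist p q"] SH_geod_seg[OF \<gamma>(1), of "dist p q"] \<gamma> \<gamma>0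
    by (simp_all add: d_def)
  then have agree: "\<gamma>0 s = \<gamma> s" if "s \<in> {0..d}" for s
    using CAT_minus1_geod_seg_unique[OF cat] that by (simp add: d_def)
  txt \<open>Both geodesics may differ beyond \<open>q\<close>, but for \<open>t < d\<close> their flows share a germ.\<close>
  have "integral {0..d} (\<lambda>t. \<Phi> (gflow t \<gamma>0)) = integral {0..d} (\<lambda>t. \<Phi> (gflow t \<gamma>))"
  proof (rule integral_spike[OF negligible_sing[of d]])
    fix t assume "t \<in> {0..d} - {d}"
    then show "\<Phi> (gflow t \<gamma>) = \<Phi> (gflow t \<gamma>0)"
      by (intro Hclass_germ[OF P gflow_in_SH[OF \<gamma>(1)] gflow_in_SH[OF \<gamma>0(1)], of "d - t"])
         (auto simp: gflow_def agree)
  qed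
  then show ?thesis
    by (simp add: dPsi_chosen_geod \<gamma>0_def d_def)
qed

lemma dPsi_isometry_invariant:
  fixes x y :: "'a::metric_space"
  assumes cat: "CAT_minus1 TYPE('a)" and ext: "geod_extendable TYPE('a)" and P: "\<Phi> \<in> Hclass"
    and g: "isometry g" and inv: "\<forall>\<gamma>\<in>SH. \<Phi> (g \<circ> \<gamma>) = \<Phi> \<gamma>"
  shows "dPsi \<Phi> (g x) (g y) = dPsi \<Phi> x y"
proof -
  define \<gamma> where "\<gamma> = chosen_geod x y"
  have \<gamma>: "\<gamma> \<in> SH" "\<gamma> 0 = x" "\<gamma> (dist x y) = y"
    using chosen_geod[OF cat ext] unfolding \<gamma>_def by auto
  have dist_g: "dist (g x) (g y) = dist x y"
    using g unfolding isometry_def by blast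
  have "dPsi \<Phi> (g x) (g y) = integral {0..dist x y} (\<lambda>t. \<Phi> (gflow t (g \<circ> \<gamma>)))"
    using dPsi_eq_integral_along[OF cat ext P isometry_comp_in_SH[OF g \<gamma>(1)]] \<gamma> dist_g by simp
  also have "\<dots> = integral {0..dist x y} (\<lambda>t. \<Phi> (g \<circ> gflow t \<gamma>))"
    by (simp add: gflow_def comp_def)
  also have "\<dots> = dPsi \<Phi> x y"
    using inv gflow_in_SH[OF \<gamma>(1)] by (simp add: dPsi_chosen_geod \<gamma>_def)
  finally show ?thesis .
qed

lemma dPsi_hat:
  fixes p q :: "'a::metric_space"
  assumes cat: "CAT_minus1 TYPE('a)" and ext: "geod_extendable TYPE('a)" and P: "\<Phi> \<in> Hclass"
  shows "dPsi (hat \<Phi>) p q = dPsi \<Phi> q p"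
proof -
  define d where "d = dist p q"
  define \<gamma> where "\<gamma> = chosen_geod p q"
  have \<gamma>: "\<gamma> \<in> SH" "\<gamma> 0 = p" "\<gamma> d = q"
    using chosen_geod[OF cat ext] unfolding \<gamma>_def d_def by auto
  define \<eta> where "\<eta> r = \<gamma> (d - r)" for r
  have \<eta>: "\<eta> \<in> SH" "\<eta> 0 = q" "\<eta> (dist q p) = p"
    using \<gamma> by (auto simp: \<eta>_def SH_def abs_minus_commute d_def dist_commute)
  have flow_\<eta>: "gflow (d - t) \<eta> = flip (gflow t \<gamma>)" for t
    by (simp add: \<eta>_def gflow_def flip_def algebra_simps)
  have "dPsi \<Phi> q p = integral {0..d} (\<lambda>t. \<Phi> (gflow t \<eta>))"
    using dPsi_eq_integral_along[OF cat ext P \<eta>] by (simp add: d_def dist_commute)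
  also have "\<dots> = integral {0..d} (\<lambda>t. \<Phi> (gflow (d - t) \<eta>))"
    by (rule integral_Icc_reflect[symmetric])
  also have "\<dots> = integral {0..d} (\<lambda>t. hat \<Phi> (gflow t \<gamma>))"
    by (simp add: flow_\<eta> hat_def)
  also have "\<dots> = dPsi (hat \<Phi>) p q"
    by (simp add: dPsi_chosen_geod \<gamma>_def d_def)
  finally show ?thesis ..
qed

lemma dPsi_Sym:
  fixes p q :: "'a::metric_space"
  assumes cat: "CAT_minus1 TYPE('a)" and ext: "geod_extendable TYPE('a)" and P: "\<Phi> \<in> Hclass"
  shows "dPsi (Sym \<Phi>) p q = (dPsi \<Phi> p q + dPsi (hat \<Phi>) p q) / 2"
proof -
  have "chosen_geod p q \<in> SH"
    using chosen_geod[OF cat ext] by blast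
  then show ?thesis
    unfolding dPsi_chosen_geod Sym_def
    by (simp add: integral_add integrable_Hclass_along_flow
        integrable_hat_Hclass_along_flow P)
qed

definition poincare_series ::
  "('a::metric_space \<Rightarrow> 'a) set \<Rightarrow> ((real \<Rightarrow> 'a) \<Rightarrow> real) \<Rightarrow> 'a \<Rightarrow> real \<Rightarrow> ennreal" where
  "poincare_series G \<Psi> p l = (\<Sum>\<^sub>\<infinity>g\<in>G. ennreal (exp (- dPsi \<Psi> p (g p) - l * dist p (g p))))"

lemma crit_exp_poincare_series:
  "crit_exp G \<Psi> p = Sup {ereal l | l. poincare_series G \<Psi> p l = \<infinity>}"
  by (simp add: crit_exp_def poincare_series_def)

lemma crit_exp_mono:
  assumes "\<And>l. poincare_series G \<Psi> p l = \<infinity> \<Longrightarrow> poincare_series G \<Psi>' p l = \<infinity>"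
  shows "crit_exp G \<Psi> p \<le> crit_exp G \<Psi>' p"
  unfolding crit_exp_poincare_series by (rule Sup_subset_mono) (use assms in blast)

lemma poincare_series_le_add:
  assumes "\<And>q. dPsi \<Psi> p q = (dPsi \<Phi>1 p q + dPsi \<Phi>2 p q) / 2"
  shows "poincare_series G \<Psi> p l \<le> poincare_series G \<Phi>1 p l + poincare_series G \<Phi>2 p l"
proof -
  have exp_midpoint: "exp ((x + y) / 2) \<le> exp x + exp y" for x y :: real
  proof -
    have "exp ((x + y) / 2) \<le> exp (max x y)" by simp
    also have "\<dots> \<le> exp x + exp y" by (simp add: max_def add_increasing add_increasing2)
    finally show ?thesis .
  qed
  let ?e = "\<lambda>\<Psi> g. ennreal (exp (- dPsi \<Psi> p (g p) - l * dist p (g p)))"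
  have "?e \<Psi> g \<le> ?e \<Phi>1 g + ?e \<Phi>2 g" for g
    using exp_midpoint[of "- dPsi \<Phi>1 p (g p) - l * dist p (g p)" "- dPsi \<Phi>2 p (g p) - l * dist p (g p)"]
    by (simp add: assms ennreal_plus[symmetric] ennreal_leI field_simps del: ennreal_plus)
  then have "poincare_series G \<Psi> p l \<le> (\<Sum>\<^sub>\<infinity>g\<in>G. ?e \<Phi>1 g + ?e \<Phi>2 g)"
    unfolding poincare_series_def by (intro infsum_mono nonneg_summable_on_complete) simp_all
  also have "\<dots> = poincare_series G \<Phi>1 p l + poincare_series G \<Phi>2 p l"
    unfolding poincare_series_def by (intro infsum_add nonneg_summable_on_complete) simp_all
  finally show ?thesis .
qed

lemma infsum_isom_subgroup_inv:
  assumes "isom_subgroup G"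
  shows "(\<Sum>\<^sub>\<infinity>g\<in>G. f (inv g)) = (\<Sum>\<^sub>\<infinity>g\<in>G. f g)"
proof -
  have "bij g" "inv g \<in> G" if "g \<in> G" for g
    using assms that unfolding isom_subgroup_def isometry_def by blast+
  then show ?thesis
    by (intro infsum_reindex_bij_witness[where i = inv and j = inv]) (auto simp: inv_inv_eq)
qed

lemma poincare_series_hat:
  fixes G :: "('a::metric_space \<Rightarrow> 'a) set"
  assumes cat: "CAT_minus1 TYPE('a)" and ext: "geod_extendable TYPE('a)"
    and G: "isom_subgroup G" and P: "\<Phi> \<in> Hclass" and inv: "G_invariant G \<Phi>"
  shows "poincare_series G (hat \<Phi>) p l = poincare_series G \<Phi> p l"
proof -
  txt \<open>The orbit point \<open>g p\<close> seen backwards from \<open>p\<close> is \<open>p\<close> seen from \<open>g\<^sup>-\<^sup>1 p\<close>.\<close>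
  have "dPsi (hat \<Phi>) p (g p) = dPsi \<Phi> p (inv g p)" "dist p (g p) = dist p (inv g p)"
    if g: "g \<in> G" for g
  proof -
    have "isometry g" "isometry (inv g)" "inv g \<in> G"
      using G g unfolding isom_subgroup_def by blast+
    moreover from this have "inv g (g p) = p"
      by (simp add: isometry_def bij_is_inj)
    moreover have "\<forall>\<gamma>\<in>SH. \<Phi> (inv g \<circ> \<gamma>) = \<Phi> \<gamma>"
      using inv \<open>inv g \<in> G\<close> unfolding G_invariant_def by blast
    ultimately show "dPsi (hat \<Phi>) p (g p) = dPsi \<Phi> p (inv g p)" "dist p (g p) = dist p (inv g p)"
      using dPsi_hat[OF cat ext P] dPsi_isometry_invariant[OF cat ext P, of "inv g" "g p" p]
      by (auto simp: isometry_def dist_commute dest: spec[of _ "g p"] spec[of _ p])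
  qed
  then show ?thesis
    unfolding poincare_series_def
    by (subst infsum_isom_subgroup_inv[OF G, symmetric]) (simp cong: infsum_cong)
qed


theorem lemma4p7:
  fixes G :: "('a::metric_space \<Rightarrow> 'a) set"
    and \<Phi> :: "(real \<Rightarrow> 'a) \<Rightarrow> real"
    and p :: 'a
  assumes "CAT_minus1 TYPE('a)"
    and "geod_extendable TYPE('a)"
    and "isom_subgroup G"
    and "cocompact G"
    and "\<Phi> \<in> Hclass"
    and "G_invariant G \<Phi>"
  shows "crit_exp G \<Phi> p = crit_exp G (hat \<Phi>) p \<and> crit_exp G (hat \<Phi>) p \<ge> crit_exp G (Sym \<Phi>) p"
proof -
  note cat = assms(1) and ext = assms(2) and G = assms(3) and P = assms(5) and inv = assms(6)
  have hat: "poincare_series G (hat \<Phi>) p l = poincare_series G \<Phi> p l" for l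
    by (rule poincare_series_hat[OF cat ext G P inv])
  have Sym: "poincare_series G (Sym \<Phi>) p l \<le> poincare_series G (hat \<Phi>) p l + poincare_series G (hat \<Phi>) p l"
    for l
    using poincare_series_le_add[of "Sym \<Phi>" p \<Phi> "hat \<Phi>" G l] dPsi_Sym[OF cat ext P] hat[of l]
    by simp
  have "crit_exp G \<Phi> p = crit_exp G (hat \<Phi>) p"
    by (simp add: crit_exp_poincare_series hat)
  moreover have "crit_exp G (Sym \<Phi>) p \<le> crit_exp G (hat \<Phi>) p"
  proof (rule crit_exp_mono)
    fix l
    assume "poincare_series G (Sym \<Phi>) p l = \<infinity>"
    with Sym[of l] show "poincare_series G (hat \<Phi>) p l = \<infinity>"
      by (simp add: top_unique ennreal_add_eq_top)
  qed
  ultimately show ?thesis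
    by simp
qed

end
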